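(* Let $P,P'\in\mathcal D$ and $e,e'\in\mathcal E$. If $P\sqsubseteq P'$ then $\mathrm{da}(P,e)\le\mathrm{da}(P',e)$, and if $e\sqsubseteq e'$ then $\mathrm{da}(P,e)\le\mathrm{da}(P,e')$.
   Context: Let $\mathcal V$ be a countably infinite set of variables. $\mathcal M$ is the set of maps $m:\mathcal V\to\mathbb N\cup\{\infty\}$, ordered pointwise. $\mathcal P$ is the set of discrete probability distributions on $\mathcal M$. For a subdistribution $\pi$ on $\mathcal M$ with total mass $|\pi|$, its weighting is $\overline\pi(x)=\frac1{|\pi|}\sum_m\pi(m)m(x)$ if $|\pi|>0$, and $\overline\pi(x)=0$ otherwise. For $p_1,p_2\in\mathcal P$: $p_1\sqsubseteq p_2$ iff there is a coupling $\omega$ of $p_1,p_2$ with $\overline{\omega(\cdot,m)}\le m$ pointwise for all $m\in\mathcal M$, where $\omega(\cdot,m)$ is the subdistribution $m'\mapsto\omega(m',m)$. For $P\subseteq\mathcal P$, $\downarrow P=\{p\mid p\sqsubseteq p'\text{ for some }p'\in P\}$. $\mathcal D=\{P\subseteq\mathcal P\mid P\ne\emptyset,\ \downarrow P=P\}$, ordered by $P_1\sqsubseteq P_2$ iff every $p_1\in P_1$ has some $p_2\in P_2$ with $p_1\sqsubseteq p_2$. $\mathcal E$ is the set of maps $e:\mathcal V\to[0,1)$, ordered pointwise. $\mathrm{dda}(m,e)=1-\prod_{x\in\mathcal V}(1-e(x))^{m(x)}$ (with $c^\infty=0$ for $0\le c<1$ and $1^\infty=1$), $\mathrm{pda}(p,e)=\sum_{m\in\mathcal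 M}p(m)\,\mathrm{dda}(m,e)$, and $\mathrm{da}(P,e)=\sup_{p\in P}\mathrm{pda}(p,e)$. *)

theory Defs
  imports "HOL-Probability.Probability"
begin

type_synonym 'v mstate = "'v \<Rightarrow> enat"

definition submass :: "('v mstate \<times> 'v mstate) pmf \<Rightarrow> 'v mstate \<Rightarrow> ennreal" where
  "submass \<omega> m = (\<Sum>\<^sub>\<infinity>m'. ennreal (pmf \<omega> (m', m)))"

definition weighting :: "('v mstate \<times> 'v mstate) pmf \<Rightarrow> 'v mstate \<Rightarrow> 'v \<Rightarrow> ennreal" where
  "weighting \<omega> m x =
     (if submass \<omega> m > 0
      then (\<Sum>\<^sub>\<infinity>m'. ennreal (pmf \<omega> (m', m)) * ennreal_of_enat (m' x)) / submass \<omega> m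
      else 0)"

definition is_coupling :: "('v mstate \<times> 'v mstate) pmf \<Rightarrow> 'v mstate pmf \<Rightarrow> 'v mstate pmf \<Rightarrow> bool" where
  "is_coupling \<omega> p1 p2 \<longleftrightarrow> map_pmf fst \<omega> = p1 \<and> map_pmf snd \<omega> = p2"

definition pmf_le :: "'v mstate pmf \<Rightarrow> 'v mstate pmf \<Rightarrow> bool" where
  "pmf_le p1 p2 \<longleftrightarrow> (\<exists>\<omega>. is_coupling \<omega> p1 p2 \<and>
      (\<forall>m x. weighting \<omega> m x \<le> ennreal_of_enat (m x)))"

definition down_closure :: "'v mstate pmf set \<Rightarrow> 'v mstate pmf set" where
  "down_closure P = {p. \<exists>p'\<in>P. pmf_le p p'}"

definition Dom :: "'v mstate pmf set set" where
  "Dom = {P. P \<noteq> {} \<and> down_closure P = P}"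

definition D_le :: "'v mstate pmf set \<Rightarrow> 'v mstate pmf set \<Rightarrow> bool" where
  "D_le P1 P2 \<longleftrightarrow> (\<forall>p1\<in>P1. \<exists>p2\<in>P2. pmf_le p1 p2)"

definition Err :: "('v \<Rightarrow> real) set" where
  "Err = {e. \<forall>x. 0 \<le> e x \<and> e x < 1}"

definition epow :: "real \<Rightarrow> enat \<Rightarrow> real" where
  "epow c k = (case k of enat n \<Rightarrow> c ^ n | \<infinity> \<Rightarrow> (if c = 1 then 1 else 0))"

text \<open>Product over all (countably many) variables of factors in [0,1]: the
  infimum of the finite partial products (= limit of partial products).\<close>
definition dda :: "'v mstate \<Rightarrow> ('v \<Rightarrow> real) \<Rightarrow> real" where
  "dda m e = 1 - (INF F\<in>{F. finite F}. \<Prod>x\<in>F. epow (1 - e x) (m x))"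

definition pda :: "'v mstate pmf \<Rightarrow> ('v \<Rightarrow> real) \<Rightarrow> real" where
  "pda p e = (\<Sum>\<^sub>\<infinity>m. pmf p m * dda m e)"

definition da :: "'v mstate pmf set \<Rightarrow> ('v \<Rightarrow> real) \<Rightarrow> real" where
  "da P e = (SUP p\<in>P. pda p e)"

end

theory Submission
  imports Defs
begin

(* Write c(x) = -ln(1 - e(x)) >= 0.  Then (1 - e x)^k = exp(-c(x) k), so
   dda(m,e) = 1 - exp(-L(m)) where L(m) = \<Sum>x c(x) m(x) is LINEAR in m.
   Monotonicity in e is pointwise: larger e gives smaller factors, hence a
   larger dda, hence larger pda and da.  Monotonicity in P reduces, via the
   coupling \<omega> witnessing p1 \<sqsubseteq> p2, to a fiberwise inequality: on the fiber of a
   state m, the \<omega>(.,m)-average of dda(m',e) is at most dda(m,e).  Since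
   t \<mapsto> 1 - exp(-t) is concave and increasing, Jensen's inequality (proved by
   the tangent line) and the weighting condition (average of L(m') \<le> L(m))
   give this for finite partial products; the infinite product is the limit
   along an exhausting chain of finite sets of variables, and monotone
   convergence passes the inequality to the limit.  Summing over the fibers
   gives pda(p1,e) \<le> pda(p2,e), and da is a supremum of pda. *)

lemma epow_bounds:
  assumes "0 \<le> c" "c \<le> 1"
  shows "0 \<le> epow c k" "epow c k \<le> 1"
  using assms by (cases k; auto simp: epow_def power_le_one)+

lemma epow_mono_base:
  assumes "0 \<le> c" "c \<le> d" "d \<le> 1"
  shows "epow c k \<le> epow d k"
  using assms by (cases k) (auto simp: epow_def power_mono)

lemma epow_Err_bounds:
  assumes "e \<in> Err"
  shows "0 \<le> epow (1 - e x) k" "epow (1 - e x) k \<le> 1"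
  using assms by (auto simp: Err_def less_imp_le intro!: epow_bounds)

definition partial_prod :: "'v set \<Rightarrow> 'v mstate \<Rightarrow> ('v \<Rightarrow> real) \<Rightarrow> real" where
  "partial_prod F m e = (\<Prod>x\<in>F. epow (1 - e x) (m x))"

lemma dda_partial_prod: "dda m e = 1 - (INF F\<in>{F. finite F}. partial_prod F m e)"
  by (simp add: dda_def partial_prod_def)

lemma partial_prod_bounds:
  assumes "e \<in> Err"
  shows "0 \<le> partial_prod F m e" "partial_prod F m e \<le> 1"
  unfolding partial_prod_def
  by (auto intro!: prod_nonneg prod_le_1 epow_Err_bounds[OF assms])

lemma bdd_below_partial_prod: "e \<in> Err \<Longrightarrow> bdd_below ((\<lambda>F. partial_prod F m e) ` A)"
  by (auto intro!: bdd_belowI2[where m=0] partial_prod_bounds)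

lemma partial_prod_antimono:
  assumes e: "e \<in> Err" and "finite G" "F \<subseteq> G"
  shows "partial_prod G m e \<le> partial_prod F m e"
proof -
  have "partial_prod G m e = (\<Prod>x\<in>G-F. epow (1 - e x) (m x)) * partial_prod F m e"
    unfolding partial_prod_def using assms by (metis prod.subset_diff)
  also have "\<dots> \<le> 1 * partial_prod F m e"
    by (intro mult_right_mono prod_le_1 partial_prod_bounds[OF e] conjI epow_Err_bounds[OF e])
  finally show ?thesis by simp
qed

lemma INF_partial_prod_bounds:
  assumes e: "e \<in> Err"
  shows "0 \<le> (INF F\<in>{F. finite F}. partial_prod F m e)"
    and "(INF F\<in>{F. finite F}. partial_prod F m e) \<le> 1"
proof -
  show "0 \<le> (INF F\<in>{F. finite F}. partial_prod F m e)"
    by (rule cINF_greatest) (auto intro: partial_prod_bounds[OF e])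
  have "(INF F\<in>{F. finite F}. partial_prod F m e) \<le> partial_prod {} m e"
    by (rule cINF_lower) (auto intro: bdd_below_partial_prod[OF e])
  then show "(INF F\<in>{F. finite F}. partial_prod F m e) \<le> 1"
    by (simp add: partial_prod_def)
qed

lemma dda_bounds:
  assumes "e \<in> Err"
  shows "0 \<le> dda m e" "dda m e \<le> 1"
  using INF_partial_prod_bounds[OF assms, of m] by (auto simp: dda_partial_prod)

lemma dda_mono_err:
  assumes e: "e \<in> Err" and e': "e' \<in> Err" and "e \<le> e'"
  shows "dda m e \<le> dda m e'"
proof -
  have factor_le: "epow (1 - e' x) (m x) \<le> epow (1 - e x) (m x)" for x
    using assms by (intro epow_mono_base) (auto simp: Err_def le_fun_def less_imp_le)
  have prod_le: "partial_prod F m e' \<le> partial_prod F m e" for F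
    unfolding partial_prod_def
    using factor_le epow_Err_bounds[OF e'] by (intro prod_mono) auto
  have "(INF F\<in>{F. finite F}. partial_prod F m e') \<le> (INF F\<in>{F. finite F}. partial_prod F m e)"
  proof (rule cINF_greatest)
    fix F :: "'a set" assume "F \<in> {F. finite F}"
    then have "(INF F\<in>{F. finite F}. partial_prod F m e') \<le> partial_prod F m e'"
      by (intro cINF_lower bdd_below_partial_prod[OF e'])
    then show "(INF F\<in>{F. finite F}. partial_prod F m e') \<le> partial_prod F m e"
      using prod_le[of F] by linarith
  qed auto
  then show ?thesis by (simp add: dda_partial_prod)
qed

lemma dda_integrable:
  assumes "e \<in> Err"
  shows "integrable (measure_pmf p) (\<lambda>m. dda m e)"
  by (rule measure_pmf.integrable_const_bound[where B=1])
     (use dda_bounds[OF assms] in \<open>auto intro!: AE_I2 simp: abs_le_iff\<close>)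

lemma pda_expectation:
  assumes e: "e \<in> Err"
  shows "pda p e = measure_pmf.expectation p (\<lambda>m. dda m e)"
proof -
  have "Infinite_Set_Sum.abs_summable_on (\<lambda>m. pmf p m * dda m e) UNIV"
    unfolding abs_summable_on_def
    by (rule Bochner_Integration.integrable_bound[OF integrable_pmf[of UNIV p]])
       (use dda_bounds[OF e] in \<open>auto intro!: mult_left_le\<close>)
  then show ?thesis
    unfolding pda_def pmf_expectation_eq_infsetsum by (simp add: infsetsum_infsum)
qed

lemma pda_nonneg:
  assumes "e \<in> Err"
  shows "0 \<le> pda p e"
  unfolding pda_expectation[OF assms]
  by (rule Bochner_Integration.integral_nonneg) (simp add: dda_bounds[OF assms])

lemma pda_le_1:
  assumes "e \<in> Err"
  shows "pda p e \<le> 1"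
  unfolding pda_expectation[OF assms]
  by (rule measure_pmf.integral_le_const[OF dda_integrable[OF assms]])
     (simp add: dda_bounds[OF assms])

lemma pda_mono_err:
  assumes "e \<in> Err" "e' \<in> Err" "e \<le> e'"
  shows "pda p e \<le> pda p e'"
  unfolding pda_expectation[OF assms(1)] pda_expectation[OF assms(2)]
  using dda_integrable dda_mono_err[OF assms] assms(1,2) by (intro integral_mono) auto

text \<open>The nonnegative-integral form, in which the coupling argument is carried out.\<close>
lemma pda_nn_integral:
  assumes e: "e \<in> Err"
  shows "ennreal (pda p e) = (\<integral>\<^sup>+m. ennreal (dda m e) \<partial>measure_pmf p)"
  unfolding pda_expectation[OF e]
  by (rule nn_integral_eq_integral[OF dda_integrable[OF e], symmetric])
     (use dda_bounds[OF e] in \<open>auto intro!: AE_I2\<close>)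

section \<open>Fibers of a coupling\<close>

lemma infsum_ennreal_nn_integral:
  fixes f :: "'a \<Rightarrow> ennreal"
  assumes "countable {x. f x \<noteq> 0}"
  shows "infsum f UNIV = (\<integral>\<^sup>+x. f x \<partial>count_space UNIV)"
proof -
  define S where "S = {x. f x \<noteq> 0}"
  have sum_S: "infsum f UNIV = infsum f S"
    by (rule infsum_cong_neutral) (auto simp: S_def)
  have int_S: "(\<integral>\<^sup>+x. f x \<partial>count_space UNIV) = (\<integral>\<^sup>+x. f x \<partial>count_space S)"
    by (subst nn_integral_count_space_indicator)
       (auto intro!: nn_integral_cong simp: S_def split: split_indicator)
  show ?thesis
  proof (cases "finite S")
    case True
    then show ?thesis unfolding sum_S int_S by (simp add: nn_integral_count_space_finite)
  next
    case False
    have bij: "bij_betw (from_nat_into S) UNIV S"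
      using assms False by (intro bij_betw_from_nat_into) (auto simp: S_def)
    have sums: "(\<lambda>n. f (from_nat_into S n)) sums infsum (\<lambda>n. f (from_nat_into S n)) UNIV"
      by (intro has_sum_imp_sums has_sum_infsum nonneg_summable_on_complete) simp
    have "infsum f S = infsum (\<lambda>n. f (from_nat_into S n)) UNIV"
      by (rule infsum_reindex_bij_betw[OF bij, symmetric])
    also have "\<dots> = (\<Sum>n. f (from_nat_into S n))"
      using sums by (simp add: sums_iff)
    also have "\<dots> = (\<integral>\<^sup>+n. f (from_nat_into S n) \<partial>count_space UNIV)"
      by (rule nn_integral_count_space_nat[symmetric])
    also have "\<dots> = (\<integral>\<^sup>+x. f x \<partial>count_space S)"
      by (rule nn_integral_bij_count_space[OF bij])
    finally show ?thesis unfolding sum_S int_S .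
  qed
qed

lemma fiber_infsum:
  fixes \<omega> :: "('a \<times> 'b) pmf" and h :: "'a \<Rightarrow> ennreal"
  shows "(\<Sum>\<^sub>\<infinity>m'. ennreal (pmf \<omega> (m', m)) * h m')
           = (\<integral>\<^sup>+z. h (fst z) * indicator {m} (snd z) \<partial>measure_pmf \<omega>)"
proof -
  have support: "countable {m'. ennreal (pmf \<omega> (m', m)) * h m' \<noteq> 0}"
    by (rule countable_subset[of _ "fst ` set_pmf \<omega>"]) (force simp: set_pmf_eq, simp)
  have bij: "bij_betw (\<lambda>m'. (m', m)) UNIV {z. snd z = m}"
    by (rule bij_betw_byWitness[where f'=fst]) auto
  have "(\<Sum>\<^sub>\<infinity>m'. ennreal (pmf \<omega> (m', m)) * h m')
      = (\<integral>\<^sup>+m'. ennreal (pmf \<omega> (m', m)) * h m' \<partial>count_space UNIV)"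
    by (rule infsum_ennreal_nn_integral[OF support])
  also have "\<dots> = (\<integral>\<^sup>+z. ennreal (pmf \<omega> z) * h (fst z) \<partial>count_space {z. snd z = m})"
    using nn_integral_bij_count_space[OF bij, of "\<lambda>z. ennreal (pmf \<omega> z) * h (fst z)"] by simp
  also have "\<dots> = (\<integral>\<^sup>+z. ennreal (pmf \<omega> z) * (h (fst z) * indicator {m} (snd z)) \<partial>count_space UNIV)"
    by (subst nn_integral_count_space_indicator)
       (auto intro!: nn_integral_cong split: split_indicator)
  also have "\<dots> = (\<integral>\<^sup>+z. h (fst z) * indicator {m} (snd z) \<partial>measure_pmf \<omega>)"
    by (rule nn_integral_measure_pmf[symmetric])
  finally show ?thesis .
qed

lemma fiber_mass:
  fixes \<omega> :: "('a \<times> 'b) pmf"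
  shows "(\<integral>\<^sup>+z. indicator {m} (snd z) \<partial>measure_pmf \<omega>) = ennreal (pmf (map_pmf snd \<omega>) m)"
proof -
  have "(\<integral>\<^sup>+z. indicator {m} (snd z) \<partial>measure_pmf \<omega>) = (\<integral>\<^sup>+z. indicator (snd -` {m}) z \<partial>measure_pmf \<omega>)"
    by (rule nn_integral_cong) (simp split: split_indicator)
  also have "\<dots> = emeasure (measure_pmf (map_pmf snd \<omega>)) {m}" by simp
  also have "\<dots> = ennreal (pmf (map_pmf snd \<omega>) m)" by (simp add: emeasure_pmf_single)
  finally show ?thesis .
qed

lemma submass_eq_pmf_snd: "submass \<omega> m = ennreal (pmf (map_pmf snd \<omega>) m)"
  unfolding submass_def using fiber_infsum[of \<omega> m "\<lambda>_. 1"] fiber_mass[where m=m and \<omega>=\<omega>] by simp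

lemma weighting_le_imp_fiber_bound:
  assumes "weighting \<omega> m x \<le> ennreal_of_enat (m x)"
  shows "(\<integral>\<^sup>+z. ennreal_of_enat (fst z x) * indicator {m} (snd z) \<partial>measure_pmf \<omega>)
           \<le> ennreal (pmf (map_pmf snd \<omega>) m) * ennreal_of_enat (m x)"
proof (cases "pmf (map_pmf snd \<omega>) m = 0")
  case True
  have "AE z in measure_pmf \<omega>. indicator {m} (snd z) = (0::ennreal)"
    using True by (auto simp: AE_measure_pmf_iff pmf_eq_0_set_pmf split: split_indicator)
  then have "(\<integral>\<^sup>+z. ennreal_of_enat (fst z x) * indicator {m} (snd z) \<partial>measure_pmf \<omega>) = 0"
    by (intro nn_integral_0_iff_AE[THEN iffD2]) (auto elim!: eventually_mono)
  then show ?thesis by simp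
next
  case False
  define s where "s = ennreal (pmf (map_pmf snd \<omega>) m)"
  define I where "I = (\<integral>\<^sup>+z. ennreal_of_enat (fst z x) * indicator {m} (snd z) \<partial>measure_pmf \<omega>)"
  have s_pos: "s > 0" using False pmf_nonneg[of "map_pmf snd \<omega>" m] by (simp add: s_def)
  have "weighting \<omega> m x = I / s"
    using s_pos fiber_infsum[of \<omega> m "\<lambda>m'. ennreal_of_enat (m' x)"]
    by (simp add: weighting_def submass_eq_pmf_snd s_def I_def)
  then have "I / s * s \<le> ennreal_of_enat (m x) * s"
    using assms by (intro mult_right_mono) simp_all
  moreover have "I / s * s = I"
    using s_pos by (simp add: s_def ennreal_divide_times ennreal_divide_self)
  ultimately show ?thesis by (simp add: I_def s_def mult.commute)
qed

lemma nn_integral_marginals_fiberwise_le: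
  fixes \<omega> :: "('a \<times> 'b) pmf" and g :: "'a \<Rightarrow> ennreal" and h :: "'b \<Rightarrow> ennreal"
  assumes fiber_le: "\<And>m. (\<integral>\<^sup>+z. g (fst z) * indicator {m} (snd z) \<partial>\<omega>) \<le> ennreal (pmf (map_pmf snd \<omega>) m) * h m"
  shows "(\<integral>\<^sup>+a. g a \<partial>map_pmf fst \<omega>) \<le> (\<integral>\<^sup>+b. h b \<partial>map_pmf snd \<omega>)"
proof -
  define S where "S = set_pmf (map_pmf snd \<omega>)"
  have split_fiber: "g (fst z) = (\<integral>\<^sup>+m. g (fst z) * indicator {m} (snd z) \<partial>count_space S)"
    if "snd z \<in> S" for z
  proof -
    have "(\<integral>\<^sup>+m. g (fst z) * indicator {m} (snd z) \<partial>count_space S)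
        = (\<integral>\<^sup>+m. g (fst z) * indicator {snd z} m \<partial>count_space S)"
      by (rule nn_integral_cong) (simp split: split_indicator)
    then show ?thesis using that by simp
  qed
  have "AE z in measure_pmf \<omega>. snd z \<in> S"
    by (auto simp: AE_measure_pmf_iff S_def)
  then have "AE z in measure_pmf \<omega>. g (fst z) = (\<integral>\<^sup>+m. g (fst z) * indicator {m} (snd z) \<partial>count_space S)"
    by (rule eventually_mono) (rule split_fiber)
  then have "(\<integral>\<^sup>+a. g a \<partial>map_pmf fst \<omega>)
      = (\<integral>\<^sup>+z. (\<integral>\<^sup>+m. g (fst z) * indicator {m} (snd z) \<partial>count_space S) \<partial>\<omega>)"
    by (simp add: nn_integral_cong_AE)
  also have "\<dots> = (\<integral>\<^sup>+m. (\<integral>\<^sup>+z. g (fst z) * indicator {m} (snd z) \<partial>\<omega>) \<partial>count_space S)"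
    by (rule nn_integral_count_space_nn_integral) (simp_all add: S_def)
  also have "\<dots> \<le> (\<integral>\<^sup>+m. ennreal (pmf (map_pmf snd \<omega>) m) * h m \<partial>count_space S)"
    by (intro nn_integral_mono fiber_le)
  also have "\<dots> = (\<integral>\<^sup>+b. h b \<partial>map_pmf snd \<omega>)"
    by (subst nn_integral_count_space_indicator)
       (auto simp: nn_integral_measure_pmf S_def pmf_eq_0_set_pmf intro!: nn_integral_cong split: split_indicator)
  finally show ?thesis .
qed

section \<open>Exponential form of the factors\<close>

definition exp_neg :: "ennreal \<Rightarrow> real" where
  "exp_neg t = (if t = \<top> then 0 else exp (- enn2real t))"

lemma exp_neg_add: "exp_neg (a + b) = exp_neg a * exp_neg b"
proof (cases "a = \<top> \<or> b = \<top>")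
  case True then show ?thesis by (auto simp: exp_neg_def)
next
  case False
  then show ?thesis
    by (auto simp: exp_neg_def enn2real_plus exp_add[symmetric] ennreal_add_eq_top top.not_eq_extremum)
qed

text \<open>The rate c(x) = -ln(1 - e(x)) \<ge> 0, so that 1 - e(x) = exp(-c(x)).\<close>
definition rate :: "('v \<Rightarrow> real) \<Rightarrow> 'v \<Rightarrow> real" where
  "rate e x = - ln (1 - e x)"

lemma rate_nonneg: "e \<in> Err \<Longrightarrow> 0 \<le> rate e x"
  by (auto simp: rate_def Err_def)

lemma epow_exp_neg:
  assumes e: "e \<in> Err"
  shows "epow (1 - e x) k = exp_neg (ennreal (rate e x) * ennreal_of_enat k)"
proof (cases k)
  case (enat n)
  have "ennreal (rate e x) * ennreal_of_enat k = ennreal (rate e x * real n)"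
    using rate_nonneg[OF e, of x] by (simp add: enat ennreal_mult' ennreal_of_nat_eq_real_of_nat)
  then have "exp_neg (ennreal (rate e x) * ennreal_of_enat k) = exp (- (rate e x * real n))"
    using rate_nonneg[OF e, of x] by (simp add: exp_neg_def)
  also have "\<dots> = exp (- rate e x) ^ n"
    by (simp add: exp_of_nat_mult[symmetric] mult.commute)
  also have "exp (- rate e x) = 1 - e x"
    using e by (simp add: rate_def Err_def)
  finally show ?thesis by (simp add: enat epow_def)
next
  case infinity
  have "e x = 0 \<longleftrightarrow> rate e x = 0" using e by (auto simp: rate_def Err_def)
  then show ?thesis
    using rate_nonneg[OF e, of x]
    by (auto simp: infinity epow_def exp_neg_def ennreal_mult_top)
qed

definition exposure :: "'v set \<Rightarrow> ('v \<Rightarrow> real) \<Rightarrow> 'v mstate \<Rightarrow> ennreal" where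
  "exposure F e m = (\<Sum>x\<in>F. ennreal (rate e x) * ennreal_of_enat (m x))"

lemma partial_prod_exp_neg:
  assumes "e \<in> Err" "finite F"
  shows "partial_prod F m e = exp_neg (exposure F e m)"
  using assms(2)
proof (induction F rule: finite_induct)
  case empty then show ?case by (simp add: partial_prod_def exposure_def exp_neg_def)
next
  case (insert x F)
  then show ?case
    by (simp add: partial_prod_def exposure_def exp_neg_add epow_exp_neg[OF assms(1)])
qed

section \<open>Jensen's inequality for the concave map t \<mapsto> 1 - exp(-t)\<close>

text \<open>The tangent line of 1 - exp(-t) at a lies above the graph:
  1 - exp(-t) \<le> 1 - exp(-a) + exp(-a) (t - a), with the term exp(-a) a moved to the left.\<close>
lemma one_minus_exp_neg_tangent:
  assumes "a \<noteq> \<top>"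
  shows "ennreal (1 - exp_neg t) + ennreal (exp (- enn2real a) * enn2real a)
           \<le> ennreal (1 - exp_neg a) + ennreal (exp (- enn2real a)) * t"
proof (cases "t = \<top>")
  case True
  then show ?thesis by (simp add: ennreal_mult_top)
next
  case False
  define A where "A = enn2real a"
  define T where "T = enn2real t"
  have a: "a = ennreal A" "0 \<le> A" using assms by (simp_all add: A_def ennreal_enn2real_if)
  have t: "t = ennreal T" "0 \<le> T" using False by (simp_all add: T_def ennreal_enn2real_if)
  have "exp (- A) * (1 + (A - T)) \<le> exp (- A) * exp (A - T)"
    using exp_ge_add_one_self[of "A - T"] by simp
  also have "\<dots> = exp (- T)" by (simp add: exp_add[symmetric])
  finally have real_ineq: "1 - exp (- T) + exp (- A) * A \<le> 1 - exp (- A) + exp (- A) * T"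
    by (simp add: algebra_simps)
  have "ennreal (1 - exp_neg t) + ennreal (exp (- A) * A) = ennreal (1 - exp (- T) + exp (- A) * A)"
    using t a False by (simp add: exp_neg_def T_def ennreal_plus)
  also have "\<dots> \<le> ennreal (1 - exp (- A) + exp (- A) * T)"
    using real_ineq by (rule ennreal_leI)
  also have "\<dots> = ennreal (1 - exp_neg a) + ennreal (exp (- A)) * t"
    using t a assms by (simp add: exp_neg_def A_def ennreal_plus ennreal_mult)
  finally show ?thesis by (simp add: A_def)
qed

lemma jensen_one_minus_exp_neg:
  fixes M :: "'a pmf" and w t :: "'a \<Rightarrow> ennreal"
  assumes mass: "(\<integral>\<^sup>+z. w z \<partial>M) = s" and s_fin: "s \<noteq> \<top>"
    and mean: "(\<integral>\<^sup>+z. t z * w z \<partial>M) \<le> s * a"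
  shows "(\<integral>\<^sup>+z. ennreal (1 - exp_neg (t z)) * w z \<partial>M) \<le> s * ennreal (1 - exp_neg a)"
proof (cases "a = \<top>")
  case True
  have "(\<integral>\<^sup>+z. ennreal (1 - exp_neg (t z)) * w z \<partial>M) \<le> (\<integral>\<^sup>+z. 1 * w z \<partial>M)"
    by (intro nn_integral_mono mult_right_mono) (auto simp: exp_neg_def)
  then show ?thesis using True mass by (simp add: exp_neg_def)
next
  case False
  define K where "K = exp (- enn2real a)"
  define C where "C = ennreal (K * enn2real a)"
  have tangent: "ennreal (1 - exp_neg (t z)) * w z + C * w z
      \<le> ennreal (1 - exp_neg a) * w z + ennreal K * (t z * w z)" for z
    using mult_right_mono[OF one_minus_exp_neg_tangent[OF False, of "t z"], of "w z"]
    by (simp add: distrib_right mult.assoc K_def C_def)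
  have "(\<integral>\<^sup>+z. ennreal (1 - exp_neg (t z)) * w z \<partial>M) + C * s
      = (\<integral>\<^sup>+z. ennreal (1 - exp_neg (t z)) * w z + C * w z \<partial>M)"
    by (simp add: nn_integral_add nn_integral_cmult mass)
  also have "\<dots> \<le> (\<integral>\<^sup>+z. ennreal (1 - exp_neg a) * w z + ennreal K * (t z * w z) \<partial>M)"
    by (intro nn_integral_mono tangent)
  also have "\<dots> = ennreal (1 - exp_neg a) * s + ennreal K * (\<integral>\<^sup>+z. t z * w z \<partial>M)"
    by (simp add: nn_integral_add nn_integral_cmult mass)
  also have "\<dots> \<le> ennreal (1 - exp_neg a) * s + ennreal K * (s * a)"
    by (intro add_left_mono mult_left_mono mean) simp
  also have "ennreal K * (s * a) = C * s"
    using False by (simp add: C_def K_def ennreal_mult ennreal_enn2real_if mult_ac)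
  finally have "C * s + (\<integral>\<^sup>+z. ennreal (1 - exp_neg (t z)) * w z \<partial>M) \<le> C * s + ennreal (1 - exp_neg a) * s"
    by (simp add: add.commute)
  moreover have "C * s \<noteq> \<top>" using s_fin by (simp add: C_def ennreal_mult_eq_top_iff)
  ultimately show ?thesis by (simp add: ennreal_add_left_cancel_le mult.commute)
qed

section \<open>The fiberwise inequality for dda\<close>

lemma fiber_jensen_partial_prod:
  fixes \<omega> :: "('v mstate \<times> 'v mstate) pmf"
  assumes e: "e \<in> Err" and F: "finite F"
    and fiber_bound: "\<And>x. (\<integral>\<^sup>+z. ennreal_of_enat (fst z x) * indicator {m} (snd z) \<partial>\<omega>)
                 \<le> ennreal (pmf (map_pmf snd \<omega>) m) * ennreal_of_enat (m x)"
  shows "(\<integral>\<^sup>+z. ennreal (1 - partial_prod F (fst z) e) * indicator {m} (snd z) \<partial>\<omega>)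
           \<le> ennreal (pmf (map_pmf snd \<omega>) m) * ennreal (1 - partial_prod F m e)"
  unfolding partial_prod_exp_neg[OF e F]
proof (rule jensen_one_minus_exp_neg[OF fiber_mass])
  let ?s = "ennreal (pmf (map_pmf snd \<omega>) m)"
  have "(\<integral>\<^sup>+z. exposure F e (fst z) * indicator {m} (snd z) \<partial>\<omega>)
      = (\<Sum>x\<in>F. ennreal (rate e x) * (\<integral>\<^sup>+z. ennreal_of_enat (fst z x) * indicator {m} (snd z) \<partial>\<omega>))"
    by (simp add: exposure_def sum_distrib_right mult.assoc nn_integral_sum nn_integral_cmult)
  also have "\<dots> \<le> (\<Sum>x\<in>F. ennreal (rate e x) * (?s * ennreal_of_enat (m x)))"
    by (intro sum_mono mult_left_mono fiber_bound) simp
  also have "\<dots> = ?s * exposure F e m"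
    by (simp add: exposure_def sum_distrib_left mult_ac)
  finally show "(\<integral>\<^sup>+z. exposure F e (fst z) * indicator {m} (snd z) \<partial>\<omega>) \<le> ?s * exposure F e m" .
qed simp

definition exhaust :: "nat \<Rightarrow> 'v set" where
  "exhaust n = from_nat_into (UNIV :: 'v set) ` {..<n}"

lemma finite_exhaust: "finite (exhaust n)"
  by (simp add: exhaust_def)

lemma exhaust_mono: "n \<le> k \<Longrightarrow> exhaust n \<subseteq> exhaust k"
  unfolding exhaust_def by auto

lemma exhaust_covers:
  assumes "countable (UNIV :: 'v set)" "finite (F :: 'v set)"
  shows "\<exists>n. F \<subseteq> exhaust n"
proof
  let ?N = "Suc (Max (to_nat_on UNIV ` F))"
  show "F \<subseteq> exhaust ?N"
  proof
    fix x assume "x \<in> F"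
    then have "to_nat_on (UNIV :: 'v set) x < ?N"
      using assms(2) by (simp add: le_imp_less_Suc)
    moreover have "from_nat_into UNIV (to_nat_on (UNIV :: 'v set) x) = x"
      using assms(1) by simp
    ultimately show "x \<in> exhaust ?N"
      unfolding exhaust_def by (metis image_eqI lessThan_iff)
  qed
qed

lemma dda_SUP_exhaust:
  fixes m :: "'v mstate"
  assumes e: "e \<in> Err" and cnt: "countable (UNIV :: 'v set)"
  shows "ennreal (dda m e) = (SUP n. ennreal (1 - partial_prod (exhaust n) m e))"
    and "incseq (\<lambda>n. ennreal (1 - partial_prod (exhaust n) m e))"
proof -
  define X where "X n = partial_prod (exhaust n) m e" for n
  have dec: "decseq X"
    unfolding X_def by (intro decseq_SucI partial_prod_antimono[OF e] finite_exhaust exhaust_mono) simp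
  have INF_eq: "(INF F\<in>{F. finite F}. partial_prod F m e) = (INF n. X n)"
  proof (rule antisym)
    show "(INF F\<in>{F. finite F}. partial_prod F m e) \<le> (INF n. X n)"
      unfolding X_def
      by (intro cINF_greatest cINF_lower bdd_below_partial_prod[OF e]) (simp_all add: finite_exhaust)
    show "(INF n. X n) \<le> (INF F\<in>{F. finite F}. partial_prod F m e)"
    proof (rule cINF_greatest)
      fix F :: "'v set" assume "F \<in> {F. finite F}"
      then obtain n where n: "F \<subseteq> exhaust n" using exhaust_covers[OF cnt] by auto
      have "(INF n. X n) \<le> X n"
        unfolding X_def by (intro cINF_lower bdd_belowI2[where m=0] partial_prod_bounds[OF e]) simp
      also have "\<dots> \<le> partial_prod F m e"
        unfolding X_def by (rule partial_prod_antimono[OF e finite_exhaust n])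
      finally show "(INF n. X n) \<le> partial_prod F m e" .
    qed auto
  qed
  have "X \<longlonglongrightarrow> (INF n. X n)"
    using dec unfolding X_def by (intro LIMSEQ_decseq_INF bdd_belowI2[where m=0] partial_prod_bounds[OF e])
  then have "(\<lambda>n. ennreal (1 - X n)) \<longlonglongrightarrow> ennreal (dda m e)"
    unfolding dda_partial_prod INF_eq by (intro tendsto_ennrealI tendsto_intros)
  moreover show inc: "incseq (\<lambda>n. ennreal (1 - partial_prod (exhaust n) m e))"
    using dec unfolding X_def incseq_def decseq_def by (auto intro!: ennreal_leI)
  ultimately show "ennreal (dda m e) = (SUP n. ennreal (1 - partial_prod (exhaust n) m e))"
    using LIMSEQ_SUP[OF inc] LIMSEQ_unique unfolding X_def by blast
qed

lemma fiber_jensen_dda: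
  fixes \<omega> :: "('v mstate \<times> 'v mstate) pmf"
  assumes e: "e \<in> Err" and cnt: "countable (UNIV :: 'v set)"
    and fiber_bound: "\<And>x. (\<integral>\<^sup>+z. ennreal_of_enat (fst z x) * indicator {m} (snd z) \<partial>\<omega>)
                 \<le> ennreal (pmf (map_pmf snd \<omega>) m) * ennreal_of_enat (m x)"
  shows "(\<integral>\<^sup>+z. ennreal (dda (fst z) e) * indicator {m} (snd z) \<partial>\<omega>)
           \<le> ennreal (pmf (map_pmf snd \<omega>) m) * ennreal (dda m e)"
proof -
  let ?s = "ennreal (pmf (map_pmf snd \<omega>) m)"
  define f where "f n z = ennreal (1 - partial_prod (exhaust n) (fst z) e) * indicator {m} (snd z)" for n z
  have inc: "incseq f"
    using dda_SUP_exhaust(2)[OF e cnt]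
    unfolding f_def incseq_def le_fun_def by (auto intro!: mult_right_mono)
  have "(\<integral>\<^sup>+z. ennreal (dda (fst z) e) * indicator {m} (snd z) \<partial>\<omega>) = (\<integral>\<^sup>+z. (SUP n. f n z) \<partial>\<omega>)"
    unfolding f_def dda_SUP_exhaust(1)[OF e cnt] by (simp add: SUP_mult_right_ennreal)
  also have "\<dots> = (SUP n. \<integral>\<^sup>+z. f n z \<partial>\<omega>)"
    by (rule nn_integral_monotone_convergence_SUP[OF inc]) simp
  also have "\<dots> \<le> (SUP n. ?s * ennreal (1 - partial_prod (exhaust n) m e))"
  proof (rule SUP_mono)
    fix n
    show "\<exists>k\<in>UNIV. (\<integral>\<^sup>+z. f n z \<partial>\<omega>) \<le> ?s * ennreal (1 - partial_prod (exhaust k) m e)"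
      using fiber_jensen_partial_prod[OF e finite_exhaust fiber_bound, of n] unfolding f_def by blast
  qed
  also have "\<dots> = ?s * ennreal (dda m e)"
    unfolding dda_SUP_exhaust(1)[OF e cnt] by (simp add: SUP_mult_left_ennreal)
  finally show ?thesis .
qed

lemma pda_mono_pmf_le:
  fixes p1 p2 :: "'v mstate pmf"
  assumes e: "e \<in> Err" and cnt: "countable (UNIV :: 'v set)" and "pmf_le p1 p2"
  shows "pda p1 e \<le> pda p2 e"
proof -
  obtain \<omega> where coupling: "is_coupling \<omega> p1 p2"
    and weighting_le: "\<And>m x. weighting \<omega> m x \<le> ennreal_of_enat (m x)"
    using assms(3) unfolding pmf_le_def by blast
  have p1: "p1 = map_pmf fst \<omega>" and p2: "p2 = map_pmf snd \<omega>"
    using coupling by (auto simp: is_coupling_def)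
  have "(\<integral>\<^sup>+m. ennreal (dda m e) \<partial>p1) \<le> (\<integral>\<^sup>+m. ennreal (dda m e) \<partial>p2)"
    unfolding p1 p2
    by (intro nn_integral_marginals_fiberwise_le fiber_jensen_dda[OF e cnt]
        weighting_le_imp_fiber_bound weighting_le)
  then show ?thesis
    by (simp add: pda_nn_integral[OF e, symmetric] ennreal_le_iff pda_nonneg[OF e])
qed

lemma da_le_if_dominated:
  assumes "P \<noteq> {}" "e' \<in> Err"
    and dominated: "\<And>p. p \<in> P \<Longrightarrow> \<exists>p'\<in>P'. pda p e \<le> pda p' e'"
  shows "da P e \<le> da P' e'"
  unfolding da_def
proof (rule cSUP_least[OF assms(1)])
  fix p assume "p \<in> P"
  then obtain p' where p': "p' \<in> P'" and le: "pda p e \<le> pda p' e'"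
    using dominated by blast
  have "bdd_above ((\<lambda>p. pda p e') ` P')"
    using pda_le_1[OF assms(2)] by (intro bdd_aboveI2)
  then have "pda p' e' \<le> (SUP p\<in>P'. pda p e')"
    by (rule cSUP_upper[OF p'])
  then show "pda p e \<le> (SUP p\<in>P'. pda p e')"
    using le by linarith
qed

theorem proposition5:
  fixes P P' :: "'v mstate pmf set" and e e' :: "'v \<Rightarrow> real"
  assumes "countable (UNIV :: 'v set)" and "infinite (UNIV :: 'v set)"
    and "P \<in> Dom" and "P' \<in> Dom" and "e \<in> Err" and "e' \<in> Err"
  shows "(D_le P P' \<longrightarrow> da P e \<le> da P' e) \<and> (e \<le> e' \<longrightarrow> da P e \<le> da P e')"
proof (intro conjI impI)
  have "P \<noteq> {}" using assms(3) by (simp add: Dom_def)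
  show "da P e \<le> da P' e" if le: "D_le P P'"
  proof (rule da_le_if_dominated[OF \<open>P \<noteq> {}\<close> assms(5)])
    fix p assume "p \<in> P"
    then obtain p' where "p' \<in> P'" "pmf_le p p'" using le by (auto simp: D_le_def)
    then show "\<exists>p'\<in>P'. pda p e \<le> pda p' e" using pda_mono_pmf_le[OF assms(5,1)] by blast
  qed
  show "da P e \<le> da P e'" if "e \<le> e'"
    using pda_mono_err[OF assms(5,6) that]
    by (intro da_le_if_dominated[OF \<open>P \<noteq> {}\<close> assms(6)]) blast
qed

end
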